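(* Let $G$ be a finite group, $X$ a finite $G$-set and $R$ an integral domain. Assume that for every $x\in X$ and every prime divisor $p$ of $[G:\mathrm{stab}_G(x)]$ one has $\{0\}\neq pR\neq R$. Then the ring $\mathrm{End}_{RG}(RX)$ has no central idempotent different from $0$ and $1$.
   Context: $RX$ denotes the permutation $RG$-module with $R$-basis $X$. *)

theory Defs
  imports "HOL-Algebra.Group_Action" "HOL-Computational_Algebra.Primes"
begin

text \<open>The permutation module RX, realised as the R-valued functions on X
  (extended by 0 outside X); X is finite, so these are exactly the finite
  R-linear combinations of the basis X.\<close>
definition perm_module :: "'b set \<Rightarrow> ('b \<Rightarrow> 'r::idom) set" where
  "perm_module X = {f. \<forall>y. y \<notin> X \<longrightarrow> f y = 0}"

text \<open>Action of g on RX, linear extension of x \<mapsto> g x on the basis: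
  (g . f)(y) = f(g^-1 y).\<close>
definition perm_act :: "('a, 'c) monoid_scheme \<Rightarrow> ('a \<Rightarrow> 'b \<Rightarrow> 'b) \<Rightarrow> 'b set
    \<Rightarrow> 'a \<Rightarrow> ('b \<Rightarrow> 'r::idom) \<Rightarrow> ('b \<Rightarrow> 'r)" where
  "perm_act G \<phi> X g f = (\<lambda>y. if y \<in> X then f (\<phi> (inv\<^bsub>G\<^esub> g) y) else 0)"

text \<open>End_{RG}(RX): R-linear endomorphisms of RX commuting with the G-action.
  Ring structure: pointwise addition and composition.\<close>
definition End_RG :: "('a, 'c) monoid_scheme \<Rightarrow> ('a \<Rightarrow> 'b \<Rightarrow> 'b) \<Rightarrow> 'b set
    \<Rightarrow> (('b \<Rightarrow> 'r::idom) \<Rightarrow> ('b \<Rightarrow> 'r)) set" where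
  "End_RG G \<phi> X = {T.
     (\<forall>f \<in> perm_module X. T f \<in> perm_module X) \<and>
     (\<forall>f \<in> perm_module X. \<forall>h \<in> perm_module X. T (\<lambda>y. f y + h y) = (\<lambda>y. T f y + T h y)) \<and>
     (\<forall>r. \<forall>f \<in> perm_module X. T (\<lambda>y. r * f y) = (\<lambda>y. r * T f y)) \<and>
     (\<forall>g \<in> carrier G. \<forall>f \<in> perm_module X. T (perm_act G \<phi> X g f) = perm_act G \<phi> X g (T f))}"

definition central_idempotent :: "('a, 'c) monoid_scheme \<Rightarrow> ('a \<Rightarrow> 'b \<Rightarrow> 'b) \<Rightarrow> 'b set
    \<Rightarrow> (('b \<Rightarrow> 'r::idom) \<Rightarrow> ('b \<Rightarrow> 'r)) \<Rightarrow> bool" where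
  "central_idempotent G \<phi> X e \<longleftrightarrow>
     e \<in> End_RG G \<phi> X \<and>
     (\<forall>f \<in> perm_module X. e (e f) = e f) \<and>
     (\<forall>T \<in> End_RG G \<phi> X. \<forall>f \<in> perm_module X. e (T f) = T (e f))"

end

theory Submission
  imports Defs "HOL-Computational_Algebra.Polynomial_Factorial"
begin

text \<open>
  A central idempotent e commutes with the projection onto each orbit O and with the map
  summing the coordinates over one orbit and spreading the result constantly over another.
  The first makes e block diagonal, the second forces all blocks to agree. On a single orbit
  the matrix of e is idempotent with constant diagonal \<alpha>, by equivariance. Over the fraction
  field its trace is its rank r \<le> |O|, so |O| \<alpha> = r already in R; since the primes dividing
  |O| are nonzero non-units of R, this forces |O| to divide r, hence r = 0 (the block is 0)
  or r = |O|, and then the complementary idempotent has trace 0 and vanishes.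
\<close>

section \<open>Arithmetic of the natural numbers inside R\<close>

lemma principal_ideal_proper_nonzero_iff:
  fixes c :: "'r::idom"
  shows "({c * r | r. True} \<noteq> {0} \<and> {c * r | r. True} \<noteq> UNIV) \<longleftrightarrow> c \<noteq> 0 \<and> \<not> c dvd 1"
proof -
  have "{c * r | r. True} = {0} \<longleftrightarrow> c = 0"
  proof
    assume "{c * r | r. True} = {0}"
    then have "c * 1 \<in> {0}" by blast
    then show "c = 0" by simp
  qed auto
  moreover have "{c * r | r. True} = UNIV \<longleftrightarrow> c dvd 1"
  proof
    assume "{c * r | r. True} = UNIV"
    then have "1 \<in> {c * r | r. True}" by blast
    then show "c dvd 1" by (auto intro: dvdI)
  next
    assume "c dvd 1"
    then obtain s where "1 = c * s" by (elim dvdE)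
    then have "t = c * (s * t)" for t by (metis mult.assoc mult_1)
    then show "{c * r | r. True} = UNIV" by blast
  qed
  ultimately show ?thesis by blast
qed

lemma of_nat_neq_0_if_prime_divisors:
  assumes "n > 0" and "\<And>p. prime p \<Longrightarrow> p dvd n \<Longrightarrow> of_nat p \<noteq> (0::'r::idom)"
  shows "of_nat n \<noteq> (0::'r)"
  using assms
proof (induction n rule: prime_divisors_induct)
  case (factor p n)
  have "of_nat n \<noteq> (0::'r)"
    using factor.prems by (intro factor.IH) auto
  moreover have "of_nat p \<noteq> (0::'r)"
    using factor.prems(2)[of p] factor.hyps by simp
  ultimately show ?case by simp
qed simp_all

lemma dvd_if_of_nat_mult_eq_of_nat:
  fixes \<alpha> :: "'r::idom"
  assumes "n > 0" and "of_nat n * \<alpha> = of_nat r"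
    and primes: "\<And>p. prime p \<Longrightarrow> p dvd n \<Longrightarrow> of_nat p \<noteq> (0::'r) \<and> \<not> (of_nat p :: 'r) dvd 1"
  shows "n dvd r"
proof -
  define g where "g = gcd n r"
  define m where "m = n div g"
  define s where "s = r div g"
  have n_eq: "n = m * g" and r_eq: "r = s * g"
    unfolding m_def s_def g_def by simp_all
  have "(of_nat g :: 'r) \<noteq> 0"
  proof (rule of_nat_neq_0_if_prime_divisors)
    show "g > 0" unfolding g_def using assms(1) by simp
    fix p assume "prime p" and "p dvd g"
    then have "p dvd n" unfolding g_def using dvd_trans gcd_dvd1 by blast
    then show "of_nat p \<noteq> (0::'r)" using primes \<open>prime p\<close> by simp
  qed
  moreover have "of_nat g * (of_nat m * \<alpha>) = of_nat g * (of_nat s :: 'r)"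
    using assms(2) unfolding n_eq r_eq by (simp add: ac_simps)
  ultimately have m_eq: "of_nat m * \<alpha> = (of_nat s :: 'r)"
    by simp
  have "coprime m s"
    unfolding m_def s_def g_def using assms(1) div_gcd_coprime by blast
  moreover obtain u v where "u * int m + v * int s = gcd (int m) (int s)"
    using bezout_int by blast
  ultimately have "u * int m + v * int s = 1"
    by simp
  then have "(of_int (u * int m + v * int s) :: 'r) = 1"
    by simp
  then have "of_int u * of_nat m + of_int v * (of_nat m * \<alpha>) = (1::'r)"
    unfolding m_eq by simp
  then have "of_nat m * (of_int u + of_int v * \<alpha>) = (1::'r)"
    by (simp add: algebra_simps)
  then have unit_m: "(of_nat m :: 'r) dvd 1"
    by (metis dvdI)
  have "m = 1"
  proof (rule ccontr)
    assume "m \<noteq> 1"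
    then obtain p k where p: "prime p" and m_pk: "m = p * k"
      using prime_factor_nat by (metis dvdE)
    then have "(of_nat p :: 'r) dvd of_nat m"
      by simp
    then have "(of_nat p :: 'r) dvd 1"
      using unit_m by (rule dvd_trans)
    moreover have "p dvd n" unfolding n_eq m_pk by simp
    ultimately show False using primes p by blast
  qed
  then show ?thesis using n_eq r_eq by simp
qed

section \<open>Idempotent matrices\<close>

definition idempotent_matrix :: "'b set \<Rightarrow> ('b \<Rightarrow> 'b \<Rightarrow> 'k::semiring_0) \<Rightarrow> bool" where
  "idempotent_matrix X M \<longleftrightarrow> (\<forall>x\<in>X. \<forall>y\<in>X. (\<Sum>w\<in>X. M x w * M w y) = M x y)"

text \<open>Subtracting the rank-one idempotent (column y0) \<otimes> (row z) / M z y0 kills row z and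
  lowers the trace by one.\<close>

lemma idempotent_matrix_deflate:
  fixes M :: "'b \<Rightarrow> 'b \<Rightarrow> 'k::field"
  assumes "finite X" and "idempotent_matrix X M" and z: "z \<in> X" and y0: "y0 \<in> X"
    and nz: "M z y0 \<noteq> 0"
  defines "N \<equiv> \<lambda>x y. M x y - M x y0 * M z y / M z y0"
  shows "idempotent_matrix (X - {z}) N" and "(\<Sum>x\<in>X - {z}. N x x) = (\<Sum>x\<in>X. M x x) - 1"
proof -
  have idem: "\<And>x y. x \<in> X \<Longrightarrow> y \<in> X \<Longrightarrow> (\<Sum>w\<in>X. M x w * M w y) = M x y"
    using assms(2) unfolding idempotent_matrix_def by blast
  have N_row_z: "N z y = 0" for y
    unfolding N_def using nz by simp
  then have sum_N: "(\<Sum>w\<in>X - {z}. N w y * f w) = (\<Sum>w\<in>X. N w y * f w)" for y f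
    using z assms(1) by (simp add: sum.remove)
  show "idempotent_matrix (X - {z}) N"
    unfolding idempotent_matrix_def
  proof (intro ballI)
    fix x y assume "x \<in> X - {z}" "y \<in> X - {z}"
    then have x: "x \<in> X" and y: "y \<in> X" by auto
    have "(\<Sum>w\<in>X - {z}. N x w * N w y) = (\<Sum>w\<in>X. N w y * N x w)"
      using sum_N[of y "N x"] by (simp add: mult.commute)
    also have "\<dots> = (\<Sum>w\<in>X. M x w * M w y) - (\<Sum>w\<in>X. M x w * M w y0) * (M z y / M z y0)
        - (M x y0 / M z y0) * (\<Sum>w\<in>X. M z w * M w y)
        + (M x y0 * M z y / (M z y0 * M z y0)) * (\<Sum>w\<in>X. M z w * M w y0)"
      unfolding N_def sum_distrib_left sum_distrib_right sum_subtractf[symmetric]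
        sum.distrib[symmetric]
      using nz by (intro sum.cong) (auto simp: field_simps)
    also have "\<dots> = N x y"
      using idem[OF x y] idem[OF x y0] idem[OF z y] idem[OF z y0] nz
      by (simp add: N_def field_simps)
    finally show "(\<Sum>w\<in>X - {z}. N x w * N w y) = N x y" .
  qed
  have "(\<Sum>x\<in>X - {z}. N x x) = (\<Sum>x\<in>X. N x x)"
    using z assms(1) N_row_z by (simp add: sum.remove)
  also have "\<dots> = (\<Sum>x\<in>X. M x x) - (\<Sum>x\<in>X. M z x * M x y0) / M z y0"
    unfolding N_def sum_subtractf sum_divide_distrib by (simp add: mult.commute)
  also have "\<dots> = (\<Sum>x\<in>X. M x x) - 1"
    using idem[OF z y0] nz by simp
  finally show "(\<Sum>x\<in>X - {z}. N x x) = (\<Sum>x\<in>X. M x x) - 1" .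
qed

lemma idempotent_matrix_trace_of_nat_field:
  fixes M :: "'b \<Rightarrow> 'b \<Rightarrow> 'k::field"
  assumes "finite X" and "idempotent_matrix X M"
  shows "\<exists>r \<le> card X. (\<Sum>x\<in>X. M x x) = of_nat r \<and> (r = 0 \<longrightarrow> (\<forall>x\<in>X. \<forall>y\<in>X. M x y = 0))"
  using assms
proof (induction "card X" arbitrary: X M rule: less_induct)
  case less
  show ?case
  proof (cases "\<forall>x\<in>X. \<forall>y\<in>X. M x y = 0")
    case True
    then show ?thesis by (intro exI[of _ 0]) auto
  next
    case False
    then obtain z y0 where z: "z \<in> X" and y0: "y0 \<in> X" and nz: "M z y0 \<noteq> 0" by blast
    note deflate = idempotent_matrix_deflate[OF less.prems z y0 nz]
    have card_less: "card (X - {z}) < card X"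
      using z less.prems(1) by (intro card_Diff1_less)
    then obtain r where r: "r \<le> card (X - {z})"
        "(\<Sum>x\<in>X - {z}. M x x - M x y0 * M z x / M z y0) = of_nat r"
      using less.hyps[OF card_less _ deflate(1)] less.prems(1) by blast
    then have "(\<Sum>x\<in>X. M x x) = of_nat (Suc r)"
      using deflate(2) by (simp add: algebra_simps)
    moreover have "Suc r \<le> card X"
      using r(1) card_less by simp
    ultimately show ?thesis by blast
  qed
qed

lemma idempotent_matrix_trace_of_nat:
  fixes M :: "'b \<Rightarrow> 'b \<Rightarrow> 'r::idom"
  assumes "finite X" and "idempotent_matrix X M"
  shows "\<exists>r \<le> card X. (\<Sum>x\<in>X. M x x) = of_nat r \<and> (r = 0 \<longrightarrow> (\<forall>x\<in>X. \<forall>y\<in>X. M x y = 0))"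
proof -
  have to_fract_of_nat: "to_fract (of_nat n :: 'r) = of_nat n" for n
    by (induction n) auto
  have "idempotent_matrix X (\<lambda>x y. to_fract (M x y))"
    using assms(2) unfolding idempotent_matrix_def by (simp flip: to_fract_mult to_fract_sum)
  then obtain r where "r \<le> card X" "(\<Sum>x\<in>X. to_fract (M x x)) = of_nat r"
      "r = 0 \<longrightarrow> (\<forall>x\<in>X. \<forall>y\<in>X. to_fract (M x y) = 0)"
    using idempotent_matrix_trace_of_nat_field[OF assms(1)] by blast
  then show ?thesis
    by (intro exI[of _ r]) (simp flip: to_fract_sum to_fract_of_nat)
qed

lemma idempotent_matrix_complement:
  fixes M :: "'b \<Rightarrow> 'b \<Rightarrow> 'r::comm_ring_1"
  assumes "finite X" and "idempotent_matrix X M"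
  shows "idempotent_matrix X (\<lambda>x y. (if x = y then 1 else 0) - M x y)"
  unfolding idempotent_matrix_def
proof (intro ballI)
  fix x y assume x: "x \<in> X" and y: "y \<in> X"
  have "(\<Sum>w\<in>X. ((if x = w then 1 else 0) - M x w) * ((if w = y then 1 else 0) - M w y))
      = (\<Sum>w\<in>X. if x = w then (if w = y then 1 else 0) - M w y else 0)
        - (\<Sum>w\<in>X. if w = y then M x w else 0) + (\<Sum>w\<in>X. M x w * M w y)"
    unfolding sum_subtractf[symmetric] sum.distrib[symmetric]
    by (rule sum.cong) (auto simp: algebra_simps)
  also have "\<dots> = (if x = y then 1 else 0) - M x y"
    using assms x y unfolding idempotent_matrix_def by simp
  finally show "(\<Sum>w\<in>X. ((if x = w then 1 else 0) - M x w) * ((if w = y then 1 else 0) - M w y))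
      = (if x = y then 1 else 0) - M x y" .
qed

lemma idempotent_matrix_const_diag_zero_or_full_trace:
  fixes M :: "'b \<Rightarrow> 'b \<Rightarrow> 'r::idom"
  assumes "finite X" and "X \<noteq> {}" and "idempotent_matrix X M" and "\<forall>x\<in>X. M x x = \<alpha>"
    and primes: "\<And>p. prime p \<Longrightarrow> p dvd card X \<Longrightarrow> of_nat p \<noteq> (0::'r) \<and> \<not> (of_nat p :: 'r) dvd 1"
  shows "(\<forall>x\<in>X. \<forall>y\<in>X. M x y = 0) \<or> of_nat (card X) * \<alpha> = of_nat (card X)"
proof -
  obtain r where r: "r \<le> card X" "(\<Sum>x\<in>X. M x x) = of_nat r"
      "r = 0 \<longrightarrow> (\<forall>x\<in>X. \<forall>y\<in>X. M x y = 0)"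
    using idempotent_matrix_trace_of_nat[OF assms(1,3)] by blast
  have trace: "of_nat (card X) * \<alpha> = of_nat r"
    using r(2) assms(4) by simp
  have "card X > 0"
    using assms(1,2) by (simp add: card_gt_0_iff)
  then have "card X dvd r"
    using trace primes by (rule dvd_if_of_nat_mult_eq_of_nat)
  show ?thesis
  proof (cases "r = 0")
    case True
    then show ?thesis using r(3) by simp
  next
    case False
    then have "r = card X"
      using \<open>card X dvd r\<close> r(1) dvd_imp_le by (metis le_antisym not_gr0)
    then show ?thesis using trace by simp
  qed
qed

lemma idempotent_matrix_const_diag_trivial:
  fixes M :: "'b \<Rightarrow> 'b \<Rightarrow> 'r::idom"
  assumes "finite X" and "X \<noteq> {}" and "idempotent_matrix X M" and "\<forall>x\<in>X. M x x = \<alpha>"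
    and primes: "\<And>p. prime p \<Longrightarrow> p dvd card X \<Longrightarrow> of_nat p \<noteq> (0::'r) \<and> \<not> (of_nat p :: 'r) dvd 1"
  shows "(\<forall>x\<in>X. \<forall>y\<in>X. M x y = 0) \<or> (\<forall>x\<in>X. \<forall>y\<in>X. M x y = (if x = y then 1 else 0))"
proof -
  let ?c = "of_nat (card X) :: 'r"
  have "?c \<noteq> 0"
    by (rule of_nat_neq_0_if_prime_divisors) (use assms(1,2) primes in \<open>simp_all add: card_gt_0_iff\<close>)
  consider "\<forall>x\<in>X. \<forall>y\<in>X. M x y = 0" | "?c * \<alpha> = ?c"
    using idempotent_matrix_const_diag_zero_or_full_trace[OF assms] by blast
  then show ?thesis
  proof cases
    case 2
    have "(\<forall>x\<in>X. \<forall>y\<in>X. (if x = y then 1 else 0) - M x y = 0) \<or> ?c * (1 - \<alpha>) = ?c"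
      using assms(4) primes
      by (intro idempotent_matrix_const_diag_zero_or_full_trace[OF assms(1,2), where \<alpha> = "1 - \<alpha>"]
          idempotent_matrix_complement[OF assms(1,3)]) auto
    moreover have "?c * (1 - \<alpha>) \<noteq> ?c"
      using 2 \<open>?c \<noteq> 0\<close> by (simp add: right_diff_distrib)
    ultimately show ?thesis by simp
  qed simp
qed

section \<open>Endomorphisms of the permutation module\<close>

definition unit_vec :: "'b \<Rightarrow> 'b \<Rightarrow> 'r::idom" where
  "unit_vec x = (\<lambda>y. if y = x then 1 else 0)"

lemma unit_vec_in_perm_module: "x \<in> X \<Longrightarrow> unit_vec x \<in> perm_module X"
  unfolding unit_vec_def perm_module_def by auto

lemma perm_module_expansion:
  assumes "f \<in> perm_module X" and "finite X"
  shows "f = (\<lambda>y. \<Sum>x\<in>X. f x * unit_vec x y)"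
proof
  fix y
  show "f y = (\<Sum>x\<in>X. f x * unit_vec x y)"
  proof (cases "y \<in> X")
    case True
    then show ?thesis
      using assms(2) unfolding unit_vec_def by (simp add: if_distrib cong: if_cong)
  next
    case False
    then show ?thesis
      using assms unfolding unit_vec_def perm_module_def by (auto intro!: sum.neutral)
  qed
qed

lemma
  assumes "T \<in> End_RG G \<phi> X" and "f \<in> perm_module X"
  shows End_RG_closed: "T f \<in> perm_module X"
    and End_RG_add: "h \<in> perm_module X \<Longrightarrow> T (\<lambda>y. f y + h y) = (\<lambda>y. T f y + T h y)"
    and End_RG_smult: "T (\<lambda>y. c * f y) = (\<lambda>y. c * T f y)"
    and End_RG_perm_act: "g \<in> carrier G \<Longrightarrow> T (perm_act G \<phi> X g f) = perm_act G \<phi> X g (T f)"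
  using assms unfolding End_RG_def by blast+

lemma End_RG_sum_unit_vec:
  assumes T: "T \<in> End_RG G \<phi> X" and "finite A" and "A \<subseteq> X"
  shows "T (\<lambda>y. \<Sum>x\<in>A. c x * unit_vec x y) = (\<lambda>y. \<Sum>x\<in>A. c x * T (unit_vec x) y)"
  using \<open>finite A\<close> \<open>A \<subseteq> X\<close>
proof (induction A rule: finite_induct)
  case empty
  have "(\<lambda>y. 0) \<in> perm_module X"
    unfolding perm_module_def by simp
  from End_RG_smult[OF T this, of 0] show ?case
    by simp
next
  case (insert a A)
  have a: "unit_vec a \<in> perm_module X"
    using insert.prems by (simp add: unit_vec_in_perm_module)
  then have ca: "(\<lambda>y. c a * unit_vec a y) \<in> perm_module X"
    unfolding perm_module_def by auto
  have "(\<lambda>y. \<Sum>x\<in>A. c x * unit_vec x y) \<in> perm_module X"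
    using insert.prems unfolding perm_module_def unit_vec_def by (auto intro!: sum.neutral)
  from End_RG_add[OF T ca this] End_RG_smult[OF T a] show ?case
    using insert by simp
qed

lemma End_RG_expansion:
  assumes "T \<in> End_RG G \<phi> X" and "f \<in> perm_module X" and "finite X"
  shows "T f = (\<lambda>y. \<Sum>x\<in>X. f x * T (unit_vec x) y)"
  using arg_cong[OF perm_module_expansion[OF assms(2,3)], of T]
    End_RG_sum_unit_vec[OF assms(1,3) subset_refl] by (rule trans)

section \<open>Orbits\<close>

sublocale group_action \<subseteq> group G
  using group_hom group_hom.axioms(1) by auto

lemma (in group_action) orbit_subset: "x \<in> E \<Longrightarrow> orbit G \<phi> x \<subseteq> E"
  unfolding orbit_def using element_image by blast

lemma (in group_action) act_in_orbit_iff: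
  assumes "x \<in> E" and "h \<in> carrier G" and "y \<in> E"
  shows "\<phi> h y \<in> orbit G \<phi> x \<longleftrightarrow> y \<in> orbit G \<phi> x"
proof
  assume "\<phi> h y \<in> orbit G \<phi> x"
  then obtain a where a: "a \<in> carrier G" "\<phi> h y = \<phi> a x" unfolding orbit_def by blast
  have "y = \<phi> (inv h) (\<phi> a x)"
    using orbit_sym_aux[OF assms(2,3)] a(2) by simp
  also have "\<dots> = \<phi> (inv h \<otimes> a) x"
    using composition_rule assms a by simp
  finally show "y \<in> orbit G \<phi> x" unfolding orbit_def using a assms by blast
next
  assume "y \<in> orbit G \<phi> x"
  then obtain a where a: "a \<in> carrier G" "y = \<phi> a x" unfolding orbit_def by blast
  then have "\<phi> h y = \<phi> (h \<otimes> a) x" using composition_rule assms by simp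
  then show "\<phi> h y \<in> orbit G \<phi> x" unfolding orbit_def using a assms by blast
qed

lemma (in group_action) bij_betw_orbit:
  assumes "x \<in> E" and "h \<in> carrier G"
  shows "bij_betw (\<phi> h) (orbit G \<phi> x) (orbit G \<phi> x)"
proof -
  let ?O = "orbit G \<phi> x"
  have "inj_on (\<phi> h) ?O"
    using inj_prop[OF assms(2)] orbit_subset[OF assms(1)] inj_on_subset by blast
  moreover have "?O \<subseteq> \<phi> h ` ?O"
  proof
    fix y assume "y \<in> ?O"
    moreover have "y \<in> E" using calculation orbit_subset[OF assms(1)] by blast
    ultimately have "\<phi> (inv h) y \<in> ?O" and "\<phi> h (\<phi> (inv h) y) = y"
      using act_in_orbit_iff[OF assms(1)] orbit_sym_aux[of "inv h" y] assms by auto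
    then show "y \<in> \<phi> h ` ?O" by force
  qed
  ultimately show ?thesis
    unfolding bij_betw_def using act_in_orbit_iff[OF assms] orbit_subset[OF assms(1)] by blast
qed

lemma (in group_action) perm_act_unit_vec:
  assumes "g \<in> carrier G" and "x \<in> E"
  shows "perm_act G \<phi> E g (unit_vec x) = unit_vec (\<phi> g x)"
proof
  fix y
  have "y \<in> E \<Longrightarrow> \<phi> (inv g) y = x \<longleftrightarrow> y = \<phi> g x"
    using orbit_sym_aux[of "inv g" y x] orbit_sym_aux[OF assms] assms by auto
  then show "perm_act G \<phi> E g (unit_vec x) y = unit_vec (\<phi> g x) y"
    using element_image[OF assms] unfolding perm_act_def unit_vec_def by auto
qed

definition restrict_to :: "'b set \<Rightarrow> ('b \<Rightarrow> 'r::zero) \<Rightarrow> ('b \<Rightarrow> 'r)" where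
  "restrict_to S f = (\<lambda>y. if y \<in> S then f y else 0)"

definition spread_sum :: "'b set \<Rightarrow> 'b set \<Rightarrow> ('b \<Rightarrow> 'r::comm_monoid_add) \<Rightarrow> ('b \<Rightarrow> 'r)" where
  "spread_sum S1 S2 f = (\<lambda>y. if y \<in> S2 then (\<Sum>x\<in>S1. f x) else 0)"

lemma (in group_action) restrict_to_orbit_in_End_RG:
  assumes "x \<in> E"
  shows "restrict_to (orbit G \<phi> x) \<in> End_RG G \<phi> E"
  using orbit_subset[OF assms] act_in_orbit_iff[OF assms]
  unfolding End_RG_def restrict_to_def perm_module_def perm_act_def
  by (auto simp: fun_eq_iff)

lemma (in group_action) spread_sum_orbits_in_End_RG:
  assumes "x1 \<in> E" and "x2 \<in> E"
  shows "spread_sum (orbit G \<phi> x1) (orbit G \<phi> x2) \<in> End_RG G \<phi> E"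
proof -
  have invariant: "(\<Sum>x\<in>orbit G \<phi> x1. perm_act G \<phi> E g f x) = (\<Sum>x\<in>orbit G \<phi> x1. f x)"
    if "g \<in> carrier G" for g f
  proof -
    have "(\<Sum>x\<in>orbit G \<phi> x1. perm_act G \<phi> E g f x) = (\<Sum>x\<in>orbit G \<phi> x1. f (\<phi> (inv g) x))"
      using orbit_subset[OF assms(1)] unfolding perm_act_def by (intro sum.cong) auto
    also have "\<dots> = (\<Sum>x\<in>orbit G \<phi> x1. f x)"
      using bij_betw_orbit[OF assms(1)] that by (intro sum.reindex_bij_betw) simp
    finally show ?thesis .
  qed
  show ?thesis
    unfolding End_RG_def
  proof (intro CollectI conjI ballI allI)
    fix g f assume "g \<in> carrier G"
    then show "spread_sum (orbit G \<phi> x1) (orbit G \<phi> x2) (perm_act G \<phi> E g f)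
        = perm_act G \<phi> E g (spread_sum (orbit G \<phi> x1) (orbit G \<phi> x2) f)"
      using orbit_subset[OF assms(2)] act_in_orbit_iff[OF assms(2)]
      unfolding spread_sum_def invariant[OF \<open>g \<in> carrier G\<close>]
      by (auto simp: perm_act_def fun_eq_iff)
  qed (use orbit_subset[OF assms(2)] in
        \<open>auto simp: spread_sum_def perm_module_def sum.distrib sum_distrib_left\<close>)
qed

lemma (in group_action) End_RG_diagonal_orbit_const:
  assumes "T \<in> End_RG G \<phi> E" and "x \<in> E" and "y \<in> orbit G \<phi> x"
  shows "T (unit_vec y) y = T (unit_vec x) x"
proof -
  obtain g where g: "g \<in> carrier G" "y = \<phi> g x" using assms(3) unfolding orbit_def by blast
  have "T (unit_vec y) = T (perm_act G \<phi> E g (unit_vec x))"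
    unfolding g(2) by (rule arg_cong[OF perm_act_unit_vec[OF g(1) assms(2), symmetric]])
  also have "\<dots> = perm_act G \<phi> E g (T (unit_vec x))"
    by (rule End_RG_perm_act[OF assms(1) unit_vec_in_perm_module[OF assms(2)] g(1)])
  finally show ?thesis
    using g element_image[OF g(1) assms(2)] orbit_sym_aux[OF g(1) assms(2)]
    unfolding perm_act_def by simp
qed

section \<open>Central idempotents\<close>

lemma
  assumes "central_idempotent G \<phi> X e"
  shows central_idempotent_End_RG: "e \<in> End_RG G \<phi> X"
    and central_idempotent_idem: "f \<in> perm_module X \<Longrightarrow> e (e f) = e f"
    and central_idempotent_commute:
      "T \<in> End_RG G \<phi> X \<Longrightarrow> f \<in> perm_module X \<Longrightarrow> e (T f) = T (e f)"
  using assms unfolding central_idempotent_def by blast+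

lemma (in group_action) central_idempotent_orbit_support:
  fixes e :: "(_ \<Rightarrow> 'r::idom) \<Rightarrow> _"
  assumes "central_idempotent G \<phi> E e" and "x \<in> E" and "y \<in> orbit G \<phi> x" and "z \<notin> orbit G \<phi> x"
  shows "e (unit_vec y) z = 0"
proof -
  let ?P = "restrict_to (orbit G \<phi> x)"
  have "y \<in> E"
    using assms(2,3) orbit_subset by blast
  have "?P (unit_vec y) = (unit_vec y :: _ \<Rightarrow> 'r)"
    using assms(3) unfolding restrict_to_def unit_vec_def by auto
  then have "e (unit_vec y) = ?P (e (unit_vec y))"
    using central_idempotent_commute[OF assms(1) restrict_to_orbit_in_End_RG[OF assms(2)]
        unit_vec_in_perm_module[OF \<open>y \<in> E\<close>]] by simp
  then have "e (unit_vec y) z = ?P (e (unit_vec y)) z"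
    by (rule fun_cong)
  then show ?thesis
    using assms(4) unfolding restrict_to_def by simp
qed

lemma (in group_action) central_idempotent_orbit_idempotent_matrix:
  fixes e :: "(_ \<Rightarrow> 'r::idom) \<Rightarrow> _"
  assumes "central_idempotent G \<phi> E e" and "finite E" and "x \<in> E"
  shows "idempotent_matrix (orbit G \<phi> x) (\<lambda>z y. e (unit_vec y) z)"
  unfolding idempotent_matrix_def
proof (intro ballI)
  fix z y assume z: "z \<in> orbit G \<phi> x" and y: "y \<in> orbit G \<phi> x"
  have e: "e \<in> End_RG G \<phi> E"
    by (rule central_idempotent_End_RG[OF assms(1)])
  have y_vec: "(unit_vec y :: _ \<Rightarrow> 'r) \<in> perm_module E"
    using y orbit_subset[OF assms(3)] by (intro unit_vec_in_perm_module) blast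
  have "(\<Sum>w\<in>orbit G \<phi> x. e (unit_vec w) z * e (unit_vec y) w)
      = (\<Sum>w\<in>orbit G \<phi> x. e (unit_vec y) w * e (unit_vec w) z)"
    by (simp add: mult.commute)
  also have "\<dots> = (\<Sum>w\<in>E. e (unit_vec y) w * e (unit_vec w) z)"
    using central_idempotent_orbit_support[OF assms(1,3) y] orbit_subset[OF assms(3)]
    by (intro sum.mono_neutral_left[OF assms(2)]) auto
  also have "\<dots> = e (e (unit_vec y)) z"
    using End_RG_expansion[OF e End_RG_closed[OF e y_vec] assms(2)] by simp
  also have "\<dots> = e (unit_vec y) z"
    using central_idempotent_idem[OF assms(1) y_vec] by simp
  finally show "(\<Sum>w\<in>orbit G \<phi> x. e (unit_vec w) z * e (unit_vec y) w) = e (unit_vec y) z" .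
qed

lemma (in group_action) central_idempotent_orbit_cases:
  fixes e :: "(_ \<Rightarrow> 'r::idom) \<Rightarrow> _"
  assumes "central_idempotent G \<phi> E e" and "finite E" and "x \<in> E"
    and "\<And>p. prime p \<Longrightarrow> p dvd card (orbit G \<phi> x) \<Longrightarrow>
      of_nat p \<noteq> (0::'r) \<and> \<not> (of_nat p :: 'r) dvd 1"
  shows "(\<forall>y\<in>orbit G \<phi> x. e (unit_vec y) = (\<lambda>_. 0)) \<or> (\<forall>y\<in>orbit G \<phi> x. e (unit_vec y) = unit_vec y)"
proof -
  let ?O = "orbit G \<phi> x"
  have fin: "finite ?O"
    using finite_subset[OF orbit_subset[OF assms(3)] assms(2)] .
  have ne: "?O \<noteq> {}"
    using orbit_refl[OF assms(3)] by blast
  have e: "e \<in> End_RG G \<phi> E"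
    by (rule central_idempotent_End_RG[OF assms(1)])
  have diag: "\<forall>y\<in>?O. e (unit_vec y) y = e (unit_vec x) x"
    using End_RG_diagonal_orbit_const[OF e assms(3)] by blast
  from idempotent_matrix_const_diag_trivial[OF fin ne
      central_idempotent_orbit_idempotent_matrix[OF assms(1-3)] diag assms(4)]
  consider "\<forall>z\<in>?O. \<forall>y\<in>?O. e (unit_vec y) z = 0"
    | "\<forall>z\<in>?O. \<forall>y\<in>?O. e (unit_vec y) z = (if z = y then 1 else 0)"
    by blast
  then show ?thesis
  proof cases
    case 1
    then have "e (unit_vec y) z = 0" if "y \<in> ?O" for y z
      using central_idempotent_orbit_support[OF assms(1,3) that] that by (cases "z \<in> ?O") auto
    then show ?thesis by (simp add: fun_eq_iff)
  next
    case 2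
    then have "e (unit_vec y) z = unit_vec y z" if "y \<in> ?O" for y z
      using central_idempotent_orbit_support[OF assms(1,3) that] that
      unfolding unit_vec_def by (cases "z \<in> ?O") auto
    then show ?thesis by (simp add: fun_eq_iff)
  qed
qed

lemma (in group_action) central_idempotent_on_unit_vecs:
  fixes e :: "(_ \<Rightarrow> 'r::idom) \<Rightarrow> _"
  assumes "central_idempotent G \<phi> E e" and "finite E"
    and primes: "\<And>x p. x \<in> E \<Longrightarrow> prime p \<Longrightarrow> p dvd card (orbit G \<phi> x) \<Longrightarrow>
      of_nat p \<noteq> (0::'r) \<and> \<not> (of_nat p :: 'r) dvd 1"
  shows "(\<forall>x\<in>E. e (unit_vec x) = (\<lambda>_. 0)) \<or> (\<forall>x\<in>E. e (unit_vec x) = unit_vec x)"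
proof (rule ccontr)
  assume "\<not> ?thesis"
  then obtain x1 x2 where x1: "x1 \<in> E" "e (unit_vec x1) \<noteq> (\<lambda>_. 0)"
    and x2: "x2 \<in> E" "e (unit_vec x2) \<noteq> unit_vec x2"
    by blast
  have orbit_cases: "(\<forall>y\<in>orbit G \<phi> x. e (unit_vec y) = (\<lambda>_. 0))
      \<or> (\<forall>y\<in>orbit G \<phi> x. e (unit_vec y) = unit_vec y)" if "x \<in> E" for x
    using central_idempotent_orbit_cases[OF assms(1,2) that primes[OF that]] .
  have id1: "e (unit_vec x1) = unit_vec x1"
    using orbit_cases[OF x1(1)] x1(2) orbit_refl[OF x1(1)] by blast
  have zero2: "e (unit_vec x) y = 0" if "x \<in> orbit G \<phi> x2" for x y
    using orbit_cases[OF x2(1)] x2(2) orbit_refl[OF x2(1)] that by auto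
  \<comment> \<open>Spreading the x1-coordinate over the orbit of x2 gives the indicator of that orbit, which e
      must both fix (e commutes with the spreading and fixes unit_vec x1) and kill.\<close>
  let ?S = "spread_sum (orbit G \<phi> x1) (orbit G \<phi> x2)"
  have S: "?S \<in> End_RG G \<phi> E"
    by (rule spread_sum_orbits_in_End_RG[OF x1(1) x2(1)])
  have x1_vec: "(unit_vec x1 :: _ \<Rightarrow> 'r) \<in> perm_module E"
    by (rule unit_vec_in_perm_module[OF x1(1)])
  have "?S (unit_vec x1) = ?S (e (unit_vec x1))"
    by (simp add: id1)
  also have "\<dots> = e (?S (unit_vec x1))"
    by (rule central_idempotent_commute[OF assms(1) S x1_vec, symmetric])
  also have "\<dots> = (\<lambda>y. \<Sum>x\<in>E. ?S (unit_vec x1) x * e (unit_vec x) y)"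
    by (rule End_RG_expansion[OF central_idempotent_End_RG[OF assms(1)] End_RG_closed[OF S x1_vec]
          assms(2)])
  also have "\<dots> = (\<lambda>_. 0)"
    using zero2 unfolding spread_sum_def by (auto intro!: sum.neutral)
  finally have "?S (unit_vec x1) x2 = (0::'r)"
    by simp
  moreover have "finite (orbit G \<phi> x1)"
    using finite_subset[OF orbit_subset[OF x1(1)] assms(2)] .
  then have "?S (unit_vec x1) x2 = (1::'r)"
    using orbit_refl[OF x1(1)] orbit_refl[OF x2(1)]
    unfolding spread_sum_def unit_vec_def by (simp add: sum.delta)
  ultimately show False
    by simp
qed

theorem proposition3p3:
  fixes G :: "('a, 'c) monoid_scheme" and \<phi> :: "'a \<Rightarrow> 'b \<Rightarrow> 'b" and X :: "'b set"
    and e :: "('b \<Rightarrow> 'r::idom) \<Rightarrow> ('b \<Rightarrow> 'r)"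
  assumes "group G" and "finite (carrier G)"
    and "group_action G X \<phi>" and "finite X"
    and "\<forall>x \<in> X. \<forall>p::nat. prime p \<and> p dvd card (rcosets\<^bsub>G\<^esub> (stabilizer G \<phi> x)) \<longrightarrow>
           {of_nat p * r | r::'r. True} \<noteq> {0} \<and> {of_nat p * r | r::'r. True} \<noteq> UNIV"
    and "central_idempotent G \<phi> X e"
  shows "(\<forall>f \<in> perm_module X. e f = (\<lambda>_. 0)) \<or> (\<forall>f \<in> perm_module X. e f = f)"
proof -
  interpret group_action G X \<phi> by fact
  have "of_nat p \<noteq> (0::'r) \<and> \<not> (of_nat p :: 'r) dvd 1"
    if "x \<in> X" and "prime p" and "p dvd card (orbit G \<phi> x)" for x p
  proof -
    have "card (rcosets\<^bsub>G\<^esub> (stabilizer G \<phi> x)) = card (orbit G \<phi> x)"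
      using bij_betw_same_card[OF orbit_stab_fun_is_bij[OF that(1)]] .
    then show ?thesis
      unfolding principal_ideal_proper_nonzero_iff[symmetric] using assms(5) that by auto
  qed
  then consider "\<forall>x\<in>X. e (unit_vec x) = (\<lambda>_. 0)" | "\<forall>x\<in>X. e (unit_vec x) = unit_vec x"
    using central_idempotent_on_unit_vecs[OF assms(6,4)] by blast
  moreover have expansion: "e f = (\<lambda>y. \<Sum>x\<in>X. f x * e (unit_vec x) y)" if "f \<in> perm_module X" for f
    using End_RG_expansion assms(4,6) that unfolding central_idempotent_def by blast
  ultimately show ?thesis
  proof cases
    case 1
    then show ?thesis using expansion by (simp cong: sum.cong)
  next
    case 2
    have "e f = f" if "f \<in> perm_module X" for f
    proof -
      have "e f = (\<lambda>y. \<Sum>x\<in>X. f x * unit_vec x y)"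
        using expansion[OF that] 2 by (simp cong: sum.cong)
      also have "\<dots> = f"
        by (rule perm_module_expansion[OF that assms(4), symmetric])
      finally show ?thesis .
    qed
    then show ?thesis by blast
  qed
qed

end
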